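(* Let $k\ge2$, $n\ge1$, and $A=\{0<1<\cdots<k-1\}$. Let $G\subseteq A^{k}$ be the set of the $k!$ words of length $k$ in which each letter of $A$ occurs exactly once, and let $\Gamma_{k,n}=G^{k^{n-1}}$ (the set of concatenations of $k^{n-1}$ words of $G$, repetitions allowed). Then the set of words $BW(M)$, as $M$ ranges over all de Bruijn sets of span $n$ over $A$, is exactly $\Gamma_{k,n}$.
   Context: A word is primitive if it is not a proper power of another word; a necklace is the set of conjugates ($xy\sim yx$) of a primitive word, its length being the common length of its words. A multiset $M=\{n_{1},\dots,n_{t}\}$ of necklaces is a de Bruijn set of span $n$ over $A$ if $|n_{1}|+\cdots+|n_{t}|=k^{n}$ and every word of $A^{n}$ is a prefix of some power of some word belonging to one of the $n_{i}$. Burrows–Wheeler map: with $l$ the lcm of the lengths of the necklaces in $M$, sort lexicographically the list of all words $v^{l/|v|}$, $v$ ranging over the words of each necklace of $M$ (with multiplicity); $BW(M)$ is the word formed by the last letters of these words, in this order. *)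

theory Defs
  imports Main "HOL-Library.Multiset" "HOL-Library.List_Lexorder"
begin

text \<open>Words over the alphabet A = {0 < 1 < ... < k-1} are lists of naturals with letters < k.
  Lists are ordered lexicographically (List_Lexorder).\<close>

definition word_over :: "nat \<Rightarrow> nat list \<Rightarrow> bool" where
  "word_over k w \<longleftrightarrow> set w \<subseteq> {0..<k}"

definition power_word :: "nat list \<Rightarrow> nat \<Rightarrow> nat list" where
  "power_word u m = concat (replicate m u)"

text \<open>primitive: not a proper power of another word (the empty word is a power of itself).\<close>
definition primitive :: "nat list \<Rightarrow> bool" where
  "primitive w \<longleftrightarrow> w \<noteq> [] \<and> \<not> (\<exists>u m. m \<ge> 2 \<and> w = power_word u m)"

definition conjugates :: "nat list \<Rightarrow> nat list set" where
  "conjugates w = {rotate i w | i. i < length w}"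

definition is_necklace :: "nat \<Rightarrow> nat list set \<Rightarrow> bool" where
  "is_necklace k N \<longleftrightarrow> (\<exists>w. primitive w \<and> word_over k w \<and> N = conjugates w)"

definition neck_len :: "nat list set \<Rightarrow> nat" where
  "neck_len N = length (SOME w. w \<in> N)"

definition deBruijn_set :: "nat \<Rightarrow> nat \<Rightarrow> nat list set multiset \<Rightarrow> bool" where
  "deBruijn_set k n M \<longleftrightarrow>
     (\<forall>N \<in># M. is_necklace k N) \<and>
     (\<Sum>N \<in># M. neck_len N) = k ^ n \<and>
     (\<forall>u. length u = n \<and> word_over k u \<longrightarrow>
        (\<exists>N \<in># M. \<exists>v \<in> N. \<exists>m. u = take (length u) (power_word v m) \<and> length u \<le> m * length v))"

definition BW :: "nat list set multiset \<Rightarrow> nat list" where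
  "BW M = (let l = Lcm (neck_len ` set_mset M);
               ws = image_mset (\<lambda>v. power_word v (l div length v)) (\<Sum>N \<in># M. mset_set N)
           in map last (sorted_list_of_multiset ws))"

definition G_set :: "nat \<Rightarrow> nat list set" where
  "G_set k = {w. length w = k \<and> (\<forall>a < k. count_list w a = 1)}"

definition Gamma :: "nat \<Rightarrow> nat \<Rightarrow> nat list set" where
  "Gamma k n = {concat ws | ws. length ws = k ^ (n - 1) \<and> (\<forall>w \<in> set ws. w \<in> G_set k)}"

end

theory Submission
  imports Defs "HOL-Combinatorics.Cycles"
begin

text \<open>Let \<open>M\<close> be a de Bruijn set and \<open>l\<close> the lcm of its necklace lengths. The words
  \<open>v\<^bsup>l/|v|\<^esup>\<close> sorted by the Burrows--Wheeler map are in order-preserving bijection with \<open>A\<^sup>n\<close>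
  via their cyclically read prefixes of length \<open>n\<close>: these prefixes cover \<open>A\<^sup>n\<close> by the de Bruijn
  property, and the length condition leaves room for at most \<open>k\<^sup>n\<close> words. Rotating such a word
  one step to the right gives another one, whose prefix is the old last letter followed by the
  old prefix without its last letter. Hence, with \<open>xb\<close> (\<open>|x| = n - 1\<close>) running through \<open>A\<^sup>n\<close> in
  lexicographic order, \<open>BW(M)\<close> lists the letters \<open>a\<close> for which \<open>ax\<close> is the prefix of the right
  rotation of the word with prefix \<open>xb\<close>; as \<open>xb \<mapsto> ax\<close> is injective, the \<open>k\<close> letters of the
  block of \<open>x\<close> are distinct, i.e. the block lies in \<open>G\<close>.

  Conversely, choosing a word of \<open>G\<close> for every \<open>x\<close> defines a permutation \<open>xb \<mapsto> ax\<close> of \<open>A\<^sup>n\<close>, i.e.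
  a cover of the de Bruijn graph by disjoint cycles. The cycles, read as necklaces, form a de Bruijn
  set, and the right rotations of its words recover the chosen permutation, so its image under
  \<open>BW\<close> is the concatenation of the chosen blocks.\<close>

section \<open>Reading a word cyclically\<close>

definition cyclic_nth :: "'a list \<Rightarrow> nat \<Rightarrow> 'a" where
  "cyclic_nth v t = v ! (t mod length v)"

definition cyclic_prefix :: "nat \<Rightarrow> 'a list \<Rightarrow> 'a list" where
  "cyclic_prefix n v = map (cyclic_nth v) [0..<n]"

lemma length_cyclic_prefix [simp]: "length (cyclic_prefix n v) = n"
  by (simp add: cyclic_prefix_def)

lemma nth_cyclic_prefix [simp]: "t < n \<Longrightarrow> cyclic_prefix n v ! t = cyclic_nth v t"
  by (simp add: cyclic_prefix_def)

lemma cyclic_nth_eq_nth: "t < length v \<Longrightarrow> cyclic_nth v t = v ! t"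
  by (simp add: cyclic_nth_def)

lemma cyclic_nth_add_length [simp]: "cyclic_nth v (t + length v) = cyclic_nth v t"
  by (simp add: cyclic_nth_def)

lemma cyclic_nth_in_set: "v \<noteq> [] \<Longrightarrow> cyclic_nth v t \<in> set v"
  by (simp add: cyclic_nth_def)

lemma cyclic_nth_rotate: "v \<noteq> [] \<Longrightarrow> cyclic_nth (rotate i v) t = cyclic_nth v (t + i)"
  by (simp add: cyclic_nth_def nth_rotate mod_add_right_eq add.commute)

lemma set_cyclic_prefix_subset: "v \<noteq> [] \<Longrightarrow> set (cyclic_prefix n v) \<subseteq> set v"
  by (auto simp: cyclic_prefix_def cyclic_nth_in_set)

lemma power_word_Suc: "power_word v (Suc m) = v @ power_word v m"
  by (simp add: power_word_def)

lemma length_power_word [simp]: "length (power_word v m) = m * length v"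
  by (induction m) (simp_all add: power_word_def)

lemma set_power_word_subset: "set (power_word v m) \<subseteq> set v"
  by (auto simp: power_word_def)

lemma nth_power_word: "t < m * length v \<Longrightarrow> power_word v m ! t = cyclic_nth v t"
proof (induction m arbitrary: t)
  case (Suc m)
  show ?case
  proof (cases "t < length v")
    case True
    then show ?thesis by (simp add: power_word_Suc nth_append cyclic_nth_eq_nth)
  next
    case False
    then have "power_word v (Suc m) ! t = cyclic_nth v (t - length v)"
      using Suc by (simp add: power_word_Suc nth_append)
    also have "\<dots> = cyclic_nth v (t - length v + length v)"
      by simp
    finally show ?thesis using False by simp
  qed
qed simp

lemma cyclic_nth_power_word: "m \<noteq> 0 \<Longrightarrow> cyclic_nth (power_word v m) t = cyclic_nth v t"
proof (cases "v = []")
  case False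
  assume "m \<noteq> 0"
  then have "t mod (m * length v) < m * length v" using False by simp
  then have "cyclic_nth (power_word v m) t = cyclic_nth v (t mod (m * length v))"
    by (simp add: cyclic_nth_def nth_power_word)
  then show ?thesis by (simp add: cyclic_nth_def mod_mod_cancel)
qed (simp add: power_word_def)

lemma cyclic_prefix_power_word:
  "m \<noteq> 0 \<Longrightarrow> cyclic_prefix n (power_word v m) = cyclic_prefix n v"
  by (simp add: cyclic_prefix_def cyclic_nth_power_word)

lemma take_power_word: "n \<le> m * length v \<Longrightarrow> take n (power_word v m) = cyclic_prefix n v"
  by (intro nth_equalityI) (simp_all add: nth_power_word)

lemma rotate_power_word: "rotate i (power_word v m) = power_word (rotate i v) m"
proof (rule nth_equalityI)
  fix t assume "t < length (rotate i (power_word v m))"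
  then have t: "t < m * length v" by simp
  then have "v \<noteq> []" "m \<noteq> 0"
    by (metis length_0_conv mult_0_right not_less0, metis mult_0 not_less0)
  have "rotate i (power_word v m) ! t = cyclic_nth (power_word v m) (t + i)"
    using t by (simp add: nth_rotate cyclic_nth_def add.commute)
  also have "\<dots> = power_word (rotate i v) m ! t"
    using t \<open>v \<noteq> []\<close> \<open>m \<noteq> 0\<close> by (simp add: nth_power_word cyclic_nth_power_word cyclic_nth_rotate)
  finally show "rotate i (power_word v m) ! t = power_word (rotate i v) m ! t" .
qed simp

section \<open>Conjugacy classes and necklaces\<close>

lemma conjugates_eq_range: "w \<noteq> [] \<Longrightarrow> conjugates w = range (\<lambda>i. rotate i w)"
  by (auto simp: conjugates_def) (metis rotate_conv_mod mod_less_divisor length_greater_0_conv)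

lemma self_in_conjugates: "w \<noteq> [] \<Longrightarrow> w \<in> conjugates w"
  by (metis conjugates_eq_range rangeI rotate0 id_apply)

lemma conjugates_Nil [simp]: "conjugates [] = {}"
  by (simp add: conjugates_def)

lemma length_conjugate: "v \<in> conjugates w \<Longrightarrow> length v = length w"
  by (auto simp: conjugates_def)

lemma set_conjugate: "v \<in> conjugates w \<Longrightarrow> set v = set w"
  by (auto simp: conjugates_def)

lemma rotate_in_conjugates: "v \<in> conjugates w \<Longrightarrow> rotate i v \<in> conjugates w"
  by (cases "w = []") (auto simp: conjugates_eq_range rotate_rotate)

lemma finite_conjugates: "finite (conjugates w)"
  by (simp add: conjugates_def)

lemma card_conjugates_le: "card (conjugates w) \<le> length w"
proof -
  have "conjugates w = (\<lambda>i. rotate i w) ` {..<length w}"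
    by (auto simp: conjugates_def)
  then show ?thesis by (metis card_image_le card_lessThan finite_lessThan)
qed

lemma conjugates_conjugate: "v \<in> conjugates w \<Longrightarrow> conjugates v = conjugates w"
proof -
  assume v: "v \<in> conjugates w"
  have sub: "conjugates v \<subseteq> conjugates w" if "v \<in> conjugates w" for v w
    using that rotate_in_conjugates by (force simp: conjugates_def)
  obtain j where j: "j < length w" "v = rotate j w"
    using v by (auto simp: conjugates_def)
  have "rotate (length w - j) v = w"
    using j by (simp add: rotate_rotate)
  moreover have "v \<noteq> []"
    using j by auto
  ultimately have "w \<in> conjugates v"
    by (metis rotate_in_conjugates self_in_conjugates)
  then show ?thesis using sub v by blast
qed

lemma neck_len_conjugates: "w \<noteq> [] \<Longrightarrow> neck_len (conjugates w) = length w"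
  unfolding neck_len_def by (metis length_conjugate self_in_conjugates someI_ex)

lemma sum_neck_len_conjugates:
  assumes "finite V" and "\<And>v. v \<in> V \<Longrightarrow> v \<noteq> [] \<and> card (conjugates v) = length v"
    and "\<And>v. v \<in> V \<Longrightarrow> conjugates v \<subseteq> V"
  shows "(\<Sum>N \<in> conjugates ` V. neck_len N) = card V"
proof -
  have "(\<Sum>N \<in> conjugates ` V. neck_len N) = (\<Sum>N \<in> conjugates ` V. card N)"
    using assms(2) by (intro sum.cong) (auto simp: neck_len_conjugates)
  also have "\<dots> = card (\<Union> (conjugates ` V))"
  proof (rule card_Union_disjoint[symmetric])
    show "pairwise disjnt (conjugates ` V)"
      by (auto simp: pairwise_def disjnt_def dest: conjugates_conjugate)
  qed (auto simp: finite_conjugates)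
  also have "\<Union> (conjugates ` V) = V"
    using assms(2,3) self_in_conjugates by blast
  finally show ?thesis .
qed

lemma necklace_memberD:
  assumes "is_necklace k N" and "v \<in> N"
  shows "v \<noteq> []" and "word_over k v" and "neck_len N = length v" and "card N \<le> length v"
    and "rotate i v \<in> N"
proof -
  obtain w where w: "primitive w" "word_over k w" "N = conjugates w"
    using assms(1) by (auto simp: is_necklace_def)
  have "w \<noteq> []"
    using w(1) by (simp add: primitive_def)
  have len: "length v = length w"
    using assms(2) w(3) by (simp add: length_conjugate)
  then show "v \<noteq> []"
    using \<open>w \<noteq> []\<close> by auto
  show "word_over k v"
    using assms(2) w(2,3) by (simp add: set_conjugate word_over_def)
  show "neck_len N = length v"
    using len w(3) \<open>w \<noteq> []\<close> by (simp add: neck_len_conjugates)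
  show "card N \<le> length v"
    using len w(3) card_conjugates_le[of w] by simp
  show "rotate i v \<in> N"
    using assms(2) w(3) by (simp add: rotate_in_conjugates)
qed

lemma finite_necklace: "is_necklace k N \<Longrightarrow> finite N"
  by (auto simp: is_necklace_def finite_conjugates)

lemma necklace_not_empty: "is_necklace k N \<Longrightarrow> N \<noteq> {}"
  by (auto simp: is_necklace_def primitive_def dest: self_in_conjugates)

section \<open>Words of fixed length in lexicographic order\<close>

definition words :: "nat \<Rightarrow> nat \<Rightarrow> nat list set" where
  "words k n = {q. length q = n \<and> word_over k q}"

lemma finite_words: "finite (words k n)"
  using finite_lists_length_eq[of "{0..<k}" n] by (simp add: words_def word_over_def conj_commute)

lemma card_words: "card (words k n) = k ^ n"
  using card_lists_length_eq[of "{0..<k}" n] by (simp add: words_def word_over_def conj_commute)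

lemma snoc_in_words_Suc [simp]: "x @ [b] \<in> words k (Suc m) \<longleftrightarrow> x \<in> words k m \<and> b < k"
  by (auto simp: words_def word_over_def)

lemma words_SucE:
  assumes "q \<in> words k (Suc m)"
  obtains x b where "q = x @ [b]" and "x \<in> words k m" and "b < k"
proof (cases q rule: rev_cases)
  case Nil
  then show ?thesis using assms by (simp add: words_def)
next
  case (snoc x b)
  then show ?thesis using assms that by simp
qed

lemma snoc_less_snoc: "b < c \<Longrightarrow> x @ [b] < x @ [c :: 'a :: linorder]"
  by (induction x) auto

lemma append_less_append_same_length:
  "length x = length y \<Longrightarrow> x < y \<Longrightarrow> x @ s < y @ (t :: 'a :: linorder list)"
proof (induction x arbitrary: y)
  case (Cons a x)
  then show ?case by (cases y) auto
qed simp

lemma take_append_le_same_length: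
  "length x = length y \<Longrightarrow> x < y \<Longrightarrow> take m (x @ s) \<le> take m (y @ (t :: 'a :: linorder list))"
proof (induction x arbitrary: y m)
  case (Cons a x)
  then show ?case by (cases y; cases m) auto
qed simp

definition lex_words :: "nat \<Rightarrow> nat \<Rightarrow> nat list list" where
  "lex_words k m = sorted_list_of_set (words k m)"

lemma set_lex_words [simp]: "set (lex_words k m) = words k m"
  by (simp add: lex_words_def finite_words)

lemma distinct_lex_words: "distinct (lex_words k m)"
  by (simp add: lex_words_def)

lemma length_lex_words [simp]: "length (lex_words k m) = k ^ m"
  by (simp add: lex_words_def card_words)

lemma lex_words_Suc:
  "lex_words k (Suc m) = concat (map (\<lambda>x. map (\<lambda>b. x @ [b]) [0..<k]) (lex_words k m))"
proof -
  let ?snocs = "\<lambda>xs. concat (map (\<lambda>x. map (\<lambda>b. x @ [b]) [0..<k]) xs)"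
  have snocs_sorted: "sorted_wrt (<) (?snocs xs)"
    if "sorted_wrt (<) xs" and "\<forall>x \<in> set xs. length x = m" for xs :: "nat list list"
    using that
  proof (induction xs)
    case (Cons x xs)
    have "sorted_wrt (<) (map (\<lambda>b. x @ [b]) [0..<k])"
      by (auto simp: sorted_wrt_map sorted_wrt_iff_nth_less snoc_less_snoc)
    moreover have "\<forall>u \<in> set (map (\<lambda>b. x @ [b]) [0..<k]). \<forall>v \<in> set (?snocs xs). u < v"
      using Cons.prems by (auto intro!: append_less_append_same_length)
    ultimately show ?case using Cons by (simp add: sorted_wrt_append)
  qed simp
  have "\<forall>x \<in> set (lex_words k m). length x = m"
    by (simp add: words_def)
  then have "sorted_wrt (<) (?snocs (lex_words k m))"
    by (intro snocs_sorted) (simp_all add: lex_words_def)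
  moreover have "set (?snocs (lex_words k m)) = words k (Suc m)"
    by (auto elim!: words_SucE)
  ultimately show ?thesis
    by (intro strict_sorted_equal) (simp_all add: lex_words_def finite_words)
qed

definition block :: "nat \<Rightarrow> (nat list \<Rightarrow> 'a) \<Rightarrow> nat list \<Rightarrow> 'a list" where
  "block k g x = map (\<lambda>b. g (x @ [b])) [0..<k]"

lemma map_lex_words_Suc: "map g (lex_words k (Suc m)) = concat (map (block k g) (lex_words k m))"
  by (simp add: lex_words_Suc map_concat comp_def block_def[abs_def])

lemma G_set_iff: "w \<in> G_set k \<longleftrightarrow> length w = k \<and> distinct w \<and> set w \<subseteq> {0..<k}"
proof
  assume "w \<in> G_set k"
  then have len: "length w = k" and once: "\<And>a. a < k \<Longrightarrow> count_list w a = 1"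
    by (auto simp: G_set_def)
  have sub: "{0..<k} \<subseteq> set w"
    using once by (metis atLeastLessThan_iff count_list_0_iff one_neq_zero subsetI)
  then have "k \<le> card (set w)"
    by (metis card_atLeastLessThan card_mono diff_zero List.finite_set)
  then have "card (set w) = length w"
    using len card_length[of w] by simp
  then show "length w = k \<and> distinct w \<and> set w \<subseteq> {0..<k}"
    using len sub card_distinct card_subset_eq[OF _ sub] by fastforce
next
  assume w: "length w = k \<and> distinct w \<and> set w \<subseteq> {0..<k}"
  then have "set w = {0..<k}"
    by (metis card_atLeastLessThan card_subset_eq diff_zero distinct_card finite_atLeastLessThan)
  then show "w \<in> G_set k"
    using w by (auto simp: G_set_def count_mset[symmetric] distinct_count_atmost_1)
qed

lemma block_in_G_set_nth_less: "block k g x \<in> G_set k \<Longrightarrow> b < k \<Longrightarrow> g (x @ [b]) < k"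
  by (auto simp: G_set_iff block_def image_subset_iff)

lemma blocks_in_G_set_iff:
  "(\<forall>x \<in> words k m. block k g x \<in> G_set k) \<longleftrightarrow>
    (\<forall>q \<in> words k (Suc m). g q < k) \<and> inj_on (\<lambda>q. g q # butlast q) (words k (Suc m))"
proof
  assume blocks: "\<forall>x \<in> words k m. block k g x \<in> G_set k"
  have "g q < k" if "q \<in> words k (Suc m)" for q
    using that by (rule words_SucE) (simp add: blocks block_in_G_set_nth_less)
  moreover have "inj_on (\<lambda>q. g q # butlast q) (words k (Suc m))"
  proof (rule inj_onI)
    fix p q assume p: "p \<in> words k (Suc m)" and q: "q \<in> words k (Suc m)"
      and eq: "g p # butlast p = g q # butlast q"
    obtain x b c where pq: "p = x @ [b]" "q = x @ [c]" and x: "x \<in> words k m" and "b < k" "c < k"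
      using p q eq by (elim words_SucE) simp
    then have "block k g x ! b = block k g x ! c"
      using eq by (simp add: block_def)
    moreover have "length (block k g x) = k" "distinct (block k g x)"
      using blocks x by (simp_all add: G_set_iff)
    ultimately show "p = q"
      using pq \<open>b < k\<close> \<open>c < k\<close> by (simp add: nth_eq_iff_index_eq)
  qed
  ultimately show "(\<forall>q \<in> words k (Suc m). g q < k) \<and> inj_on (\<lambda>q. g q # butlast q) (words k (Suc m))"
    by blast
next
  assume "(\<forall>q \<in> words k (Suc m). g q < k) \<and> inj_on (\<lambda>q. g q # butlast q) (words k (Suc m))"
  then have range: "\<forall>q \<in> words k (Suc m). g q < k"
    and inj: "inj_on (\<lambda>q. g q # butlast q) (words k (Suc m))"
    by blast+
  show "\<forall>x \<in> words k m. block k g x \<in> G_set k"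
  proof
    fix x assume x: "x \<in> words k m"
    have "b = c" if "b < k" "c < k" "g (x @ [b]) = g (x @ [c])" for b c
      using inj_onD[OF inj, of "x @ [b]" "x @ [c]"] that x by simp
    then have "distinct (block k g x)"
      by (auto simp: block_def distinct_map inj_on_def)
    moreover have "set (block k g x) \<subseteq> {0..<k}"
      using range x by (auto simp: block_def)
    ultimately show "block k g x \<in> G_set k"
      by (simp add: G_set_iff block_def)
  qed
qed

lemma permutes_Cons_butlast:
  assumes "n \<noteq> 0" and "\<forall>q \<in> words k n. g q < k" and "inj_on (\<lambda>q. g q # butlast q) (words k n)"
  shows "(\<lambda>q. if q \<in> words k n then g q # butlast q else q) permutes words k n"
    (is "?tau permutes _")
proof (rule bij_imp_permutes)
  have "inj_on ?tau (words k n)"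
    using assms(3) by (simp add: inj_on_def)
  moreover have "?tau ` words k n \<subseteq> words k n"
    using assms(1,2) by (fastforce simp: words_def word_over_def dest: in_set_butlastD)
  ultimately show "bij_betw ?tau (words k n) (words k n)"
    unfolding bij_betw_def using endo_inj_surj[OF finite_words] by blast
qed simp

lemma concat_blocks_in_Gamma:
  "\<forall>x \<in> words k m. block k g x \<in> G_set k \<Longrightarrow>
    concat (map (block k g) (lex_words k m)) \<in> Gamma k (Suc m)"
  unfolding Gamma_def by (auto intro!: exI[of _ "map (block k g) (lex_words k m)"])

lemma ex_map_block_eq:
  assumes "distinct xs" and "length bs = length xs" and "\<forall>b \<in> set bs. length b = k"
  obtains g where "map (block k g) xs = bs"
proof -
  define B where "B x = the (map_of (zip xs bs) x)" for x
  have B: "map B xs = bs"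
    by (rule nth_equalityI) (simp_all add: B_def map_of_zip_nth assms)
  have "block k (\<lambda>q. B (butlast q) ! last q) x = B x" if "x \<in> set xs" for x
  proof -
    have "length (B x) = k"
      using that B assms(3) by auto
    then show ?thesis
      unfolding block_def using map_nth[of "B x"] by simp
  qed
  then have "map (block k (\<lambda>q. B (butlast q) ! last q)) xs = map B xs"
    by (rule map_cong[OF refl])
  then have "map (block k (\<lambda>q. B (butlast q) ! last q)) xs = bs"
    using B by simp
  then show thesis
    by (rule that)
qed

section \<open>The words sorted by the Burrows--Wheeler map\<close>

definition bw_lcm :: "nat list set multiset \<Rightarrow> nat" where
  "bw_lcm M = Lcm (neck_len ` set_mset M)"

definition bw_power :: "nat list set multiset \<Rightarrow> nat list \<Rightarrow> nat list" where
  "bw_power M v = power_word v (bw_lcm M div length v)"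

definition bw_words :: "nat list set multiset \<Rightarrow> nat list multiset" where
  "bw_words M = image_mset (bw_power M) (\<Sum>N \<in># M. mset_set N)"

lemma BW_eq_map_last: "BW M = map last (sorted_list_of_multiset (bw_words M))"
  by (simp add: BW_def bw_words_def bw_power_def[abs_def] bw_lcm_def Let_def)

lemma size_bw_words: "size (bw_words M) = (\<Sum>N \<in># M. card N)"
  by (simp add: bw_words_def multiset.map_comp comp_def)

lemma rotate_bw_power: "rotate i (bw_power M v) = bw_power M (rotate i v)"
  by (simp add: bw_power_def rotate_power_word)

locale de_Bruijn =
  fixes k n :: nat and M :: "nat list set multiset"
  assumes de_Bruijn_set: "deBruijn_set k n M" and n_not_0: "n \<noteq> 0"
begin

lemma necklace: "N \<in># M \<Longrightarrow> is_necklace k N"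
  using de_Bruijn_set by (simp add: deBruijn_set_def)

lemma in_bw_words_iff: "w \<in># bw_words M \<longleftrightarrow> (\<exists>N \<in># M. \<exists>v \<in> N. w = bw_power M v)"
proof -
  have "\<forall>N \<in># M. finite N"
    using necklace finite_necklace by blast
  then have "set_mset (\<Sum>N \<in># M. mset_set N) = (\<Union>N \<in> set_mset M. N)"
    by (induction M) auto
  then show ?thesis
    by (auto simp: bw_words_def)
qed

lemma bw_lcm_pos: "0 < bw_lcm M"
proof -
  have "neck_len N \<noteq> 0" if "N \<in># M" for N
    using necklace[OF that] necklace_not_empty necklace_memberD(1,3) by fastforce
  then have "0 \<notin> neck_len ` set_mset M"
    by force
  then show ?thesis
    unfolding bw_lcm_def by (metis Lcm_0_iff finite_imageI finite_set_mset gr0I)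
qed

lemma length_dvd_bw_lcm: "N \<in># M \<Longrightarrow> v \<in> N \<Longrightarrow> length v dvd bw_lcm M"
  unfolding bw_lcm_def by (metis dvd_Lcm image_eqI necklace necklace_memberD(3))

lemma cyclic_prefix_bw_power:
  assumes "N \<in># M" and "v \<in> N"
  shows "cyclic_prefix m (bw_power M v) = cyclic_prefix m v"
proof -
  have "bw_lcm M div length v \<noteq> 0"
    using length_dvd_bw_lcm[OF assms] bw_lcm_pos by (auto elim!: dvdE)
  then show ?thesis
    by (simp add: bw_power_def cyclic_prefix_power_word)
qed

lemma in_bw_wordsD:
  assumes "w \<in># bw_words M"
  shows "length w = bw_lcm M" and "word_over k w" and "rotate i w \<in># bw_words M"
    and "cyclic_prefix n w \<in> words k n"
proof -
  obtain N v where Nv: "N \<in># M" "v \<in> N" and w: "w = bw_power M v"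
    using assms in_bw_words_iff by blast
  note v = necklace_memberD[OF necklace[OF Nv(1)] Nv(2)]
  show "length w = bw_lcm M"
    using length_dvd_bw_lcm[OF Nv] w by (simp add: bw_power_def)
  show "word_over k w"
    using v(2) set_power_word_subset w by (auto simp: word_over_def bw_power_def)
  show "rotate i w \<in># bw_words M"
    unfolding in_bw_words_iff w rotate_bw_power using Nv v(5) by blast
  show "cyclic_prefix n w \<in> words k n"
    using v(1,2) set_cyclic_prefix_subset[of v n]
    by (simp add: cyclic_prefix_bw_power[OF Nv] w words_def word_over_def)
qed

lemma in_bw_words_not_Nil: "w \<in># bw_words M \<Longrightarrow> w \<noteq> []"
  using in_bw_wordsD(1) bw_lcm_pos by fastforce

lemma cyclic_prefix_image_bw_words: "cyclic_prefix n ` set_mset (bw_words M) = words k n"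
proof
  show "cyclic_prefix n ` set_mset (bw_words M) \<subseteq> words k n"
    using in_bw_wordsD(4) by blast
  show "words k n \<subseteq> cyclic_prefix n ` set_mset (bw_words M)"
  proof
    fix u assume "u \<in> words k n"
    then have "length u = n \<and> word_over k u"
      by (simp add: words_def)
    then have "\<exists>N \<in># M. \<exists>v \<in> N. \<exists>m. u = take n (power_word v m) \<and> n \<le> m * length v"
      using de_Bruijn_set unfolding deBruijn_set_def by blast
    then obtain N v m where Nv: "N \<in># M" "v \<in> N"
      and "u = take n (power_word v m)" "n \<le> m * length v"
      by blast
    then have "u = cyclic_prefix n (bw_power M v)"
      by (simp add: take_power_word cyclic_prefix_bw_power)
    then show "u \<in> cyclic_prefix n ` set_mset (bw_words M)"
      using Nv in_bw_words_iff by blast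
  qed
qed

lemma card_bw_words: "card (set_mset (bw_words M)) = k ^ n"
  and size_bw_words_eq: "size (bw_words M) = k ^ n"
proof -
  have "card N \<le> neck_len N" if "N \<in># M" for N
    using necklace[OF that] necklace_not_empty necklace_memberD(3,4) by fastforce
  then have "size (bw_words M) \<le> (\<Sum>N \<in># M. neck_len N)"
    unfolding size_bw_words by (rule sum_mset_mono)
  also have "\<dots> = k ^ n"
    using de_Bruijn_set by (simp add: deBruijn_set_def)
  finally have "size (bw_words M) \<le> k ^ n" .
  moreover have "card (set_mset (bw_words M)) \<le> size (bw_words M)"
    using card_length[of "sorted_list_of_multiset (bw_words M)"]
    by (simp flip: size_mset)
  moreover have "k ^ n \<le> card (set_mset (bw_words M))"
    using card_image_le[of "set_mset (bw_words M)" "cyclic_prefix n"]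
    by (simp add: cyclic_prefix_image_bw_words card_words)
  ultimately show "card (set_mset (bw_words M)) = k ^ n" "size (bw_words M) = k ^ n"
    by simp_all
qed

lemma inj_on_cyclic_prefix: "inj_on (cyclic_prefix n) (set_mset (bw_words M))"
  using cyclic_prefix_image_bw_words card_bw_words card_words
  by (intro eq_card_imp_inj_on) simp_all

lemma distinct_sorted_bw_words: "distinct (sorted_list_of_multiset (bw_words M))"
proof (rule card_distinct)
  show "card (set (sorted_list_of_multiset (bw_words M)))
    = length (sorted_list_of_multiset (bw_words M))"
    using card_bw_words size_bw_words_eq by (simp flip: size_mset)
qed

lemma cyclic_prefix_mono:
  assumes "v \<in># bw_words M" and "w \<in># bw_words M" and "v \<le> w"
  shows "cyclic_prefix n v \<le> cyclic_prefix n w"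
proof (cases "v = w")
  case False
  have prefix_eq: "cyclic_prefix n u = take n (u @ power_word u (n - 1))" if "u \<in># bw_words M" for u
  proof -
    have "n \<le> n * length u"
      using in_bw_words_not_Nil[OF that] by (cases u) simp_all
    then have "cyclic_prefix n u = take n (power_word u n)"
      by (simp add: take_power_word)
    then show ?thesis
      using n_not_0 by (metis Suc_pred' bot_nat_0.not_eq_extremum power_word_Suc)
  qed
  show ?thesis
    unfolding prefix_eq[OF assms(1)] prefix_eq[OF assms(2)]
    using assms False by (intro take_append_le_same_length) (simp_all add: in_bw_wordsD(1))
qed simp

lemma map_cyclic_prefix_sorted_bw_words:
  "map (cyclic_prefix n) (sorted_list_of_multiset (bw_words M)) = lex_words k n"
proof -
  let ?S = "sorted_list_of_multiset (bw_words M)"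
  have "sorted (map (cyclic_prefix n) ?S)"
    unfolding sorted_wrt_map
    by (rule sorted_wrt_mono_rel[OF _ sorted_sorted_list_of_multiset])
      (simp add: cyclic_prefix_mono)
  moreover have "distinct (map (cyclic_prefix n) ?S)"
    using distinct_sorted_bw_words inj_on_cyclic_prefix by (simp add: distinct_map)
  ultimately show ?thesis
    using cyclic_prefix_image_bw_words
    by (intro strict_sorted_equal[symmetric]) (simp_all add: strict_sorted_iff lex_words_def finite_words)
qed

definition bw_word :: "nat list \<Rightarrow> nat list" where
  "bw_word q = the_inv_into (set_mset (bw_words M)) (cyclic_prefix n) q"

lemma bw_word_in_bw_words: "q \<in> words k n \<Longrightarrow> bw_word q \<in># bw_words M"
  unfolding bw_word_def
  by (rule the_inv_into_into[OF inj_on_cyclic_prefix]) (simp_all add: cyclic_prefix_image_bw_words)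

lemma cyclic_prefix_bw_word: "q \<in> words k n \<Longrightarrow> cyclic_prefix n (bw_word q) = q"
  unfolding bw_word_def
  by (rule f_the_inv_into_f[OF inj_on_cyclic_prefix]) (simp add: cyclic_prefix_image_bw_words)

lemma bw_word_cyclic_prefix: "w \<in># bw_words M \<Longrightarrow> bw_word (cyclic_prefix n w) = w"
  unfolding bw_word_def using inj_on_cyclic_prefix by (rule the_inv_into_f_f)

lemma BW_eq_map_last_bw_word: "BW M = map (\<lambda>q. last (bw_word q)) (lex_words k n)"
proof -
  let ?S = "sorted_list_of_multiset (bw_words M)"
  have "BW M = map (\<lambda>w. last (bw_word (cyclic_prefix n w))) ?S"
    unfolding BW_eq_map_last by (intro map_cong) (simp_all add: bw_word_cyclic_prefix)
  also have "\<dots> = map (\<lambda>q. last (bw_word q)) (map (cyclic_prefix n) ?S)"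
    by simp
  finally show ?thesis
    by (simp add: map_cyclic_prefix_sorted_bw_words)
qed

lemma last_bw_word_less: "q \<in> words k n \<Longrightarrow> last (bw_word q) < k"
proof -
  assume "q \<in> words k n"
  then have "bw_word q \<in># bw_words M"
    by (rule bw_word_in_bw_words)
  then show ?thesis
    using in_bw_wordsD(2) in_bw_words_not_Nil last_in_set unfolding word_over_def by fastforce
qed

lemma cyclic_prefix_rotate_last:
  assumes w: "w \<in># bw_words M"
  shows "cyclic_prefix n (rotate (bw_lcm M - 1) w) = last w # butlast (cyclic_prefix n w)"
proof (rule nth_equalityI)
  fix t assume "t < length (cyclic_prefix n (rotate (bw_lcm M - 1) w))"
  then have t: "t < n" by simp
  have len: "length w = bw_lcm M" and "w \<noteq> []"
    using in_bw_wordsD(1)[OF w] in_bw_words_not_Nil[OF w] by simp_all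
  then have "cyclic_prefix n (rotate (bw_lcm M - 1) w) ! t = cyclic_nth w (t + (length w - 1))"
    using t by (simp add: cyclic_nth_rotate)
  also have "\<dots> = (last w # butlast (cyclic_prefix n w)) ! t"
  proof (cases t)
    case 0
    then show ?thesis using \<open>w \<noteq> []\<close> by (simp add: cyclic_nth_eq_nth last_conv_nth)
  next
    case (Suc s)
    then have "t + (length w - 1) = s + length w"
      using \<open>w \<noteq> []\<close> by simp
    then have "cyclic_nth w (t + (length w - 1)) = cyclic_nth w s"
      by simp
    then show ?thesis using Suc t by (simp add: nth_butlast)
  qed
  finally show "cyclic_prefix n (rotate (bw_lcm M - 1) w) ! t
    = (last w # butlast (cyclic_prefix n w)) ! t" .
qed (use n_not_0 in \<open>cases n; simp\<close>)

lemma rotate_1_rotate_last: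
  assumes "w \<in># bw_words M"
  shows "rotate 1 (rotate (bw_lcm M - 1) w) = w"
proof -
  have "rotate 1 (rotate (bw_lcm M - 1) w) = rotate (1 + (bw_lcm M - 1)) w"
    by (simp only: rotate_rotate)
  also have "1 + (bw_lcm M - 1) = length w"
    using bw_lcm_pos in_bw_wordsD(1)[OF assms] by simp
  finally show ?thesis
    by simp
qed

lemma inj_on_last_bw_word_Cons_butlast:
  "inj_on (\<lambda>q. last (bw_word q) # butlast q) (words k n)"
proof (rule inj_onI)
  let ?r = "\<lambda>q. rotate (bw_lcm M - 1) (bw_word q)"
  fix p q assume p: "p \<in> words k n" and q: "q \<in> words k n"
    and eq: "last (bw_word p) # butlast p = last (bw_word q) # butlast q"
  have "cyclic_prefix n (?r q) = last (bw_word q) # butlast q" if "q \<in> words k n" for q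
    using cyclic_prefix_rotate_last[OF bw_word_in_bw_words[OF that]] cyclic_prefix_bw_word[OF that]
    by simp
  then have "cyclic_prefix n (?r p) = cyclic_prefix n (?r q)"
    using eq p q by simp
  then have "?r p = ?r q"
    by (rule inj_onD[OF inj_on_cyclic_prefix]) (simp_all add: in_bw_wordsD(3) bw_word_in_bw_words p q)
  then have "rotate 1 (?r p) = rotate 1 (?r q)"
    by (rule arg_cong)
  then have "bw_word p = bw_word q"
    using rotate_1_rotate_last[OF bw_word_in_bw_words[OF p]]
      rotate_1_rotate_last[OF bw_word_in_bw_words[OF q]] by simp
  then show "p = q"
    using p q by (metis cyclic_prefix_bw_word)
qed

end

lemma BW_in_Gamma:
  assumes "deBruijn_set k n M" and "n \<noteq> 0"
  shows "BW M \<in> Gamma k n"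
proof -
  interpret de_Bruijn k n M
    using assms by unfold_locales
  obtain m where n: "n = Suc m"
    using assms(2) not0_implies_Suc by blast
  let ?g = "\<lambda>q. last (bw_word q)"
  have "\<forall>x \<in> words k m. block k ?g x \<in> G_set k"
    using blocks_in_G_set_iff[of k m ?g] inj_on_last_bw_word_Cons_butlast last_bw_word_less n
    by simp
  moreover have "BW M = concat (map (block k ?g) (lex_words k m))"
    unfolding BW_eq_map_last_bw_word n by (rule map_lex_words_Suc)
  ultimately show ?thesis
    using concat_blocks_in_Gamma n by simp
qed

section \<open>Cycle covers of the de Bruijn graph\<close>

text \<open>By \<open>tl_tau\<close>, \<open>tau q\<close> is an in-neighbour of \<open>q\<close> in the de Bruijn graph of span \<open>n\<close>, so the
  permutation \<open>tau\<close> is a cover of that graph by disjoint cycles.\<close>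

locale de_Bruijn_cycle_cover =
  fixes k n :: nat and tau :: "nat list \<Rightarrow> nat list"
  assumes tau_permutes: "tau permutes words k n" and n_not_0: "n \<noteq> 0"
    and tl_tau: "\<And>q. q \<in> words k n \<Longrightarrow> tl (tau q) = butlast q"
begin

abbreviation shift :: "nat list \<Rightarrow> nat list" where
  "shift \<equiv> inv tau"

lemma shift_permutes: "shift permutes words k n"
  using tau_permutes by (rule permutes_inv)

lemma permutation_shift: "permutation shift"
  using shift_permutes finite_words by (auto simp: permutation_permutes)

lemma funpow_shift_in_words: "q \<in> words k n \<Longrightarrow> (shift ^^ t) q \<in> words k n"
  using shift_permutes by (rule permutes_in_funpow_image)

lemma butlast_shift: "q \<in> words k n \<Longrightarrow> butlast (shift q) = tl q"
  using tl_tau[of "shift q"] permutes_in_image[OF shift_permutes, of q]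
  by (simp add: permutes_inverses(1)[OF tau_permutes])

lemma nth_funpow_shift: "q \<in> words k n \<Longrightarrow> t + j < n \<Longrightarrow> (shift ^^ t) q ! j = q ! (t + j)"
proof (induction t arbitrary: j)
  case (Suc t)
  have q: "(shift ^^ t) q \<in> words k n"
    using Suc.prems(1) by (rule funpow_shift_in_words)
  have "length ((shift ^^ Suc t) q) = n"
    using funpow_shift_in_words[OF Suc.prems(1), of "Suc t"] by (simp add: words_def)
  then have "(shift ^^ Suc t) q ! j = butlast (shift ((shift ^^ t) q)) ! j"
    using Suc.prems(2) by (simp add: nth_butlast)
  also have "\<dots> = (shift ^^ t) q ! Suc j"
    using q Suc.prems(2) by (simp add: butlast_shift nth_tl words_def)
  also have "\<dots> = q ! (Suc t + j)"
    using Suc by simp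
  finally show ?case .
qed simp

definition cycle_word :: "nat list \<Rightarrow> nat list" where
  "cycle_word q = map hd (support shift q)"

lemma length_cycle_word: "length (cycle_word q) = least_power shift q"
  by (simp add: cycle_word_def)

lemma cycle_word_not_Nil: "cycle_word q \<noteq> []"
  using least_power_of_permutation(2)[OF permutation_shift]
  by (simp flip: length_greater_0_conv add: length_cycle_word)

lemma cyclic_nth_cycle_word: "cyclic_nth (cycle_word q) t = hd ((shift ^^ t) q)"
proof -
  have "cyclic_nth (cycle_word q) t = hd ((shift ^^ (t mod least_power shift q)) q)"
    using least_power_of_permutation(2)[OF permutation_shift]
    by (simp add: cyclic_nth_def cycle_word_def)
  also have "\<dots> = hd ((shift ^^ t) q)"
    using least_power_of_permutation(1)[OF permutation_shift] by (simp add: funpow_mod_eq)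
  finally show ?thesis .
qed

lemma cyclic_prefix_rotate_cycle_word:
  assumes "q \<in> words k n"
  shows "cyclic_prefix n (rotate i (cycle_word q)) = (shift ^^ i) q"
proof (rule nth_equalityI)
  have q: "(shift ^^ i) q \<in> words k n"
    using assms by (rule funpow_shift_in_words)
  then show "length (cyclic_prefix n (rotate i (cycle_word q))) = length ((shift ^^ i) q)"
    by (simp add: words_def)
  fix t assume "t < length (cyclic_prefix n (rotate i (cycle_word q)))"
  then have t: "t < n" by simp
  have "cyclic_prefix n (rotate i (cycle_word q)) ! t = hd ((shift ^^ t) ((shift ^^ i) q))"
    using t cycle_word_not_Nil
    by (simp add: cyclic_nth_rotate cyclic_nth_cycle_word funpow_add)
  also have "\<dots> = (shift ^^ t) ((shift ^^ i) q) ! 0"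
    using funpow_shift_in_words[OF q, of t] n_not_0 by (auto simp: hd_conv_nth words_def)
  also have "\<dots> = (shift ^^ i) q ! t"
    using nth_funpow_shift[OF q, of t 0] t by simp
  finally show "cyclic_prefix n (rotate i (cycle_word q)) ! t = (shift ^^ i) q ! t" .
qed

lemma cyclic_prefix_cycle_word: "q \<in> words k n \<Longrightarrow> cyclic_prefix n (cycle_word q) = q"
  using cyclic_prefix_rotate_cycle_word[of q 0] by simp

lemma least_power_shift_funpow: "least_power shift ((shift ^^ i) q) = least_power shift q"
proof (induction i)
  case (Suc i)
  have "(shift ^^ m) (shift x) = shift x \<longleftrightarrow> (shift ^^ m) x = x" for m x
    using permutes_inj[OF shift_permutes] by (metis funpow_swap1 inj_eq)
  then have "least_power shift (shift x) = least_power shift x" for x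
    by (simp add: least_power_def)
  then show ?case
    using Suc by simp
qed simp

lemma rotate_cycle_word: "rotate i (cycle_word q) = cycle_word ((shift ^^ i) q)"
proof (rule nth_equalityI)
  show "length (rotate i (cycle_word q)) = length (cycle_word ((shift ^^ i) q))"
    by (simp add: length_cycle_word least_power_shift_funpow)
  fix t assume "t < length (rotate i (cycle_word q))"
  then have "rotate i (cycle_word q) ! t = cyclic_nth (rotate i (cycle_word q)) t"
    and "cycle_word ((shift ^^ i) q) ! t = cyclic_nth (cycle_word ((shift ^^ i) q)) t"
    by (simp_all add: cyclic_nth_eq_nth length_cycle_word least_power_shift_funpow)
  then show "rotate i (cycle_word q) ! t = cycle_word ((shift ^^ i) q) ! t"
    using cycle_word_not_Nil by (simp add: cyclic_nth_rotate cyclic_nth_cycle_word funpow_add)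
qed

lemma word_over_cycle_word: "q \<in> words k n \<Longrightarrow> word_over k (cycle_word q)"
  using funpow_shift_in_words n_not_0
  by (fastforce simp: word_over_def words_def cycle_word_def intro: hd_in_set)

lemma primitive_cycle_word:
  assumes q: "q \<in> words k n"
  shows "primitive (cycle_word q)"
  unfolding primitive_def
proof (intro conjI)
  show "cycle_word q \<noteq> []"
    by (rule cycle_word_not_Nil)
  show "\<not> (\<exists>u m. 2 \<le> m \<and> cycle_word q = power_word u m)"
  proof
  assume "\<exists>u m. 2 \<le> m \<and> cycle_word q = power_word u m"
  then obtain u m where m: "2 \<le> m" and u: "cycle_word q = power_word u m"
    by blast
  have "u \<noteq> []"
    using u cycle_word_not_Nil[of q] by (auto simp: power_word_def)
  have "2 * length u \<le> m * length u"
    using m by (rule mult_le_mono1)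
  then have "0 < length u" and "length u < least_power shift q"
    using \<open>u \<noteq> []\<close> by (simp_all flip: length_cycle_word add: u)
  moreover have "rotate (length u) (cycle_word q) = cycle_word q"
    using u by (simp add: rotate_power_word)
  then have "(shift ^^ length u) q = q"
    using cyclic_prefix_rotate_cycle_word[OF q] cyclic_prefix_cycle_word[OF q] by metis
  then have "least_power shift q dvd length u"
    by (simp add: least_power_dvd[OF permutation_shift])
  ultimately show False
    by (simp add: nat_dvd_not_less)
  qed
qed

lemma card_conjugates_cycle_word:
  assumes q: "q \<in> words k n"
  shows "card (conjugates (cycle_word q)) = length (cycle_word q)"
proof -
  let ?p = "least_power shift q"
  have "inj_on (\<lambda>i. (shift ^^ i) q) {..<?p}"
    using cycle_of_permutation[OF permutation_shift, of q] by (simp add: distinct_map lessThan_atLeast0)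
  then have "inj_on (cyclic_prefix n \<circ> (\<lambda>i. rotate i (cycle_word q))) {..<?p}"
    by (simp add: comp_def cyclic_prefix_rotate_cycle_word[OF q])
  then have "inj_on (\<lambda>i. rotate i (cycle_word q)) {..<?p}"
    by (rule inj_on_imageI2)
  moreover have "conjugates (cycle_word q) = (\<lambda>i. rotate i (cycle_word q)) ` {..<?p}"
    by (auto simp: conjugates_def length_cycle_word)
  ultimately show ?thesis
    by (simp add: card_image length_cycle_word)
qed

definition cycle_necklaces :: "nat list set multiset" where
  "cycle_necklaces = mset_set (conjugates ` cycle_word ` words k n)"

lemma set_mset_cycle_necklaces: "set_mset cycle_necklaces = conjugates ` cycle_word ` words k n"
  by (simp add: cycle_necklaces_def finite_words)

lemma conjugates_cycle_word_subset: "q \<in> words k n \<Longrightarrow> conjugates (cycle_word q) \<subseteq> cycle_word ` words k n"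
  using rotate_cycle_word funpow_shift_in_words by (auto simp: conjugates_def)

lemma sum_neck_len_cycle_necklaces: "(\<Sum>N \<in># cycle_necklaces. neck_len N) = k ^ n"
proof -
  have "(\<Sum>N \<in># cycle_necklaces. neck_len N) = (\<Sum>N \<in> conjugates ` cycle_word ` words k n. neck_len N)"
    by (simp add: cycle_necklaces_def finite_words sum_unfold_sum_mset)
  also have "\<dots> = card (cycle_word ` words k n)"
  proof (rule sum_neck_len_conjugates)
    show "finite (cycle_word ` words k n)"
      by (simp add: finite_words)
  next
    fix v assume "v \<in> cycle_word ` words k n"
    then show "v \<noteq> [] \<and> card (conjugates v) = length v"
      using cycle_word_not_Nil card_conjugates_cycle_word by auto
  next
    fix v assume "v \<in> cycle_word ` words k n"
    then show "conjugates v \<subseteq> cycle_word ` words k n"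
      using conjugates_cycle_word_subset by blast
  qed
  also have "\<dots> = k ^ n"
    using inj_on_inverseI[of "words k n" "cyclic_prefix n" cycle_word] cyclic_prefix_cycle_word
    by (simp add: card_image card_words)
  finally show ?thesis .
qed

lemma deBruijn_set_cycle_necklaces: "deBruijn_set k n cycle_necklaces"
  unfolding deBruijn_set_def
proof (intro conjI allI impI ballI)
  fix N assume "N \<in># cycle_necklaces"
  then obtain q where "q \<in> words k n" and "N = conjugates (cycle_word q)"
    by (auto simp: set_mset_cycle_necklaces)
  then show "is_necklace k N"
    using primitive_cycle_word word_over_cycle_word by (auto simp: is_necklace_def)
next
  show "(\<Sum>N \<in># cycle_necklaces. neck_len N) = k ^ n"
    by (rule sum_neck_len_cycle_necklaces)
next
  fix u assume "length u = n \<and> word_over k u"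
  then have u: "u \<in> words k n" and len: "length u = n"
    by (simp_all add: words_def)
  have "n \<le> n * length (cycle_word u)"
    using cycle_word_not_Nil[of u] by (cases "cycle_word u") simp_all
  then have "u = take (length u) (power_word (cycle_word u) n)"
    by (simp add: len take_power_word cyclic_prefix_cycle_word[OF u])
  moreover have "conjugates (cycle_word u) \<in># cycle_necklaces"
    using u by (simp add: set_mset_cycle_necklaces)
  moreover have "cycle_word u \<in> conjugates (cycle_word u)"
    using cycle_word_not_Nil by (rule self_in_conjugates)
  ultimately show "\<exists>N \<in># cycle_necklaces. \<exists>v \<in> N. \<exists>m.
      u = take (length u) (power_word v m) \<and> length u \<le> m * length v"
    using \<open>n \<le> n * length (cycle_word u)\<close> len by blast
qed

sublocale de_Bruijn k n cycle_necklaces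
  using deBruijn_set_cycle_necklaces n_not_0 by unfold_locales

lemma cyclic_prefix_rotate_1:
  assumes "w \<in># bw_words cycle_necklaces"
  shows "cyclic_prefix n (rotate 1 w) = shift (cyclic_prefix n w)"
proof -
  obtain N v where Nv: "N \<in># cycle_necklaces" "v \<in> N" and w: "w = bw_power cycle_necklaces v"
    using assms in_bw_words_iff by blast
  then obtain q i where q: "q \<in> words k n" and v: "v = rotate i (cycle_word q)"
    by (auto simp: set_mset_cycle_necklaces conjugates_def)
  have "rotate 1 v \<in> N"
    using necklace_memberD(5)[OF necklace[OF Nv(1)] Nv(2)] .
  then have "cyclic_prefix n (rotate 1 w) = cyclic_prefix n (rotate 1 v)"
    using Nv(1) by (simp add: w rotate_bw_power cyclic_prefix_bw_power)
  also have "\<dots> = (shift ^^ (1 + i)) q"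
    using q by (simp only: v rotate_rotate cyclic_prefix_rotate_cycle_word)
  also have "\<dots> = shift ((shift ^^ i) q)"
    by simp
  also have "(shift ^^ i) q = cyclic_prefix n w"
    using q Nv by (simp add: w v cyclic_prefix_bw_power cyclic_prefix_rotate_cycle_word)
  finally show ?thesis .
qed

lemma tau_eq_last_bw_word:
  assumes q: "q \<in> words k n"
  shows "tau q = last (bw_word q) # butlast q"
proof -
  let ?w = "bw_word q"
  let ?r = "rotate (bw_lcm cycle_necklaces - 1) ?w"
  have w: "?w \<in># bw_words cycle_necklaces"
    using q by (rule bw_word_in_bw_words)
  have "shift (cyclic_prefix n ?r) = cyclic_prefix n (rotate 1 ?r)"
    using cyclic_prefix_rotate_1[OF in_bw_wordsD(3)[OF w]] by simp
  also have "\<dots> = q"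
    using rotate_1_rotate_last[OF w] cyclic_prefix_bw_word[OF q] by simp
  finally have "tau q = cyclic_prefix n ?r"
    using permutes_inverses(1)[OF tau_permutes] by metis
  also have "\<dots> = last ?w # butlast q"
    using cyclic_prefix_rotate_last[OF w] cyclic_prefix_bw_word[OF q] by simp
  finally show ?thesis .
qed

lemma BW_cycle_necklaces: "BW cycle_necklaces = map (\<lambda>q. hd (tau q)) (lex_words k n)"
  unfolding BW_eq_map_last_bw_word by (intro map_cong) (simp_all add: tau_eq_last_bw_word)

end

lemma ex_de_Bruijn_set_BW_eq:
  assumes "w \<in> Gamma k n" and "n \<noteq> 0"
  shows "\<exists>M. deBruijn_set k n M \<and> BW M = w"
proof -
  obtain m where n: "n = Suc m"
    using assms(2) not0_implies_Suc by blast
  obtain bs where w: "w = concat bs" and len: "length bs = k ^ m"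
    and G: "\<forall>b \<in> set bs. b \<in> G_set k"
    using assms(1) n by (auto simp: Gamma_def)
  obtain g where g: "map (block k g) (lex_words k m) = bs"
    using ex_map_block_eq[of "lex_words k m" bs k] distinct_lex_words len G by (auto simp: G_set_iff)
  then have "\<forall>x \<in> words k m. block k g x \<in> G_set k"
    using G by auto
  then have "(\<lambda>q. if q \<in> words k n then g q # butlast q else q) permutes words k n"
    using permutes_Cons_butlast[of n k g] blocks_in_G_set_iff[of k m g] n by simp
  with assms(2) interpret de_Bruijn_cycle_cover k n "\<lambda>q. if q \<in> words k n then g q # butlast q else q"
    by unfold_locales simp_all
  have "BW cycle_necklaces = map g (lex_words k n)"
    unfolding BW_cycle_necklaces by (intro map_cong) simp_all
  also have "\<dots> = w"
    using n g w by (simp add: map_lex_words_Suc)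
  finally show ?thesis
    using deBruijn_set_cycle_necklaces by blast
qed

theorem theorem3p4:
  fixes k n :: nat
  assumes "k \<ge> 2" and "n \<ge> 1"
  shows "{BW M | M. deBruijn_set k n M} = Gamma k n"
  using BW_in_Gamma ex_de_Bruijn_set_BW_eq assms(2) by fastforce

end
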